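(* Let $g\ge2$ and $n\ge2$. Regarding $P_{g,n}(a_1,\dots,a_n)$ as a polynomial in $a_1,\dots,a_n$, we have $P_{g,n}|_{a_i=0}\equiv0$ identically (as a polynomial in the remaining variables) for each $i=1,\dots,n$.
   Context: For $g\ge2$, $n\ge1$, $$P_{g,n}(a_1,\dots,a_n):=\sum_{k=1}^n\frac{(-1)^k(2g-3+k)!}{k!}\sum_{(I_1,\dots,I_k)}\ \sum_{\substack{d_1,\dots,d_k\in\mathbb{Z}_{\ge0}\\ d_1+\cdots+d_k=g-2+n}}\prod_{j=1}^k\binom{2a_{[I_j]}+1}{2d_j}\prod_{i=1}^{|I_j|-1}(2d_j+1-2i),$$ where $(I_1,\dots,I_k)$ runs over ordered $k$-tuples of nonempty pairwise disjoint subsets of $\{1,\dots,n\}$ with union $\{1,\dots,n\}$, $a_{[I]}:=\sum_{\ell\in I}a_\ell$, and $\binom{x}{m}:=x(x-1)\cdots(x-m+1)/m!$ for $m\ge0$, a polynomial in $x$. *)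

theory Defs
  imports Complex_Main
begin

definition ordered_set_partitions :: "nat \<Rightarrow> nat \<Rightarrow> nat set list set" where
  "ordered_set_partitions n k =
     {Is. length Is = k \<and> (\<forall>j<k. Is ! j \<noteq> {})
        \<and> (\<forall>i<k. \<forall>j<k. i \<noteq> j \<longrightarrow> Is ! i \<inter> Is ! j = {})
        \<and> \<Union>(set Is) = {1..n}}"

definition weak_compositions :: "nat \<Rightarrow> nat \<Rightarrow> nat list set" where
  "weak_compositions k m = {ds. length ds = k \<and> sum_list ds = m}"

text \<open>P_{g,n}(a_1,...,a_n), evaluated at real values a_1,...,a_n (given by a :: nat => real;
  values of a outside {1..n} are irrelevant).\<close>
definition P :: "nat \<Rightarrow> nat \<Rightarrow> (nat \<Rightarrow> real) \<Rightarrow> real" where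
  "P g n a =
    (\<Sum>k=1..n. (-1)^k * fact (2*g - 3 + k) / fact k *
      (\<Sum>Is\<in>ordered_set_partitions n k.
         \<Sum>ds\<in>weak_compositions k (g - 2 + n).
           \<Prod>j<k. ((2 * (\<Sum>l\<in>Is ! j. a l) + 1) gchoose (2 * ds ! j))
                   * (\<Prod>i=1..card (Is ! j) - 1. (of_nat (2 * ds ! j + 1) - 2 * of_nat i))))"

end

theory Submission
  imports Defs
begin

text \<open>
  Write \<open>T\<^sub>k(S)\<close> for the inner double sum of \<open>P\<close> over ordered partitions of \<open>S\<close> into \<open>k\<close>
  blocks, and let \<open>a\<^sub>i = 0\<close>, \<open>R = {1..n} - {i}\<close>. Deleting \<open>i\<close> from an ordered partition of
  \<open>{1..n}\<close> either removes a singleton block \<open>{i}\<close>, whose factor is \<open>[d = 0]\<close>, or shrinks a block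
  \<open>J\<close>, whose factor then loses exactly the linear term \<open>2d + 1 - 2|J|\<close>. Summing these linear
  terms over all blocks gives \<open>2(g - 2 + n) + k - 2(n - 1) = 2g - 2 + k\<close>, hence
  \<open>T\<^sub>k({1..n}) = k T\<^sub>k\<^sub>-\<^sub>1(R) + (2g - 2 + k) T\<^sub>k(R)\<close>. With the coefficients
  \<open>(-1)\<^sup>k (2g - 3 + k)!/k!\<close> the sum defining \<open>P\<close> then telescopes to
  \<open>T\<^sub>0(R) = T\<^sub>n(R) = 0\<close>.
\<close>

definition list_insert :: "nat \<Rightarrow> 'a \<Rightarrow> 'a list \<Rightarrow> 'a list" where
  "list_insert p x xs = take p xs @ x # drop p xs"

definition list_remove :: "nat \<Rightarrow> 'a list \<Rightarrow> 'a list" where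
  "list_remove p xs = take p xs @ drop (Suc p) xs"

lemma length_list_insert [simp]: "p \<le> length xs \<Longrightarrow> length (list_insert p x xs) = Suc (length xs)"
  by (simp add: list_insert_def)

lemma length_list_remove [simp]: "p < length xs \<Longrightarrow> length (list_remove p xs) = length xs - 1"
  by (simp add: list_remove_def)

lemma nth_list_insert:
  "p \<le> length xs \<Longrightarrow> j \<le> length xs \<Longrightarrow>
    list_insert p x xs ! j = (if j < p then xs ! j else if j = p then x else xs ! (j - 1))"
  by (auto simp: list_insert_def nth_append min_def)

lemma nth_list_insert_same [simp]: "p \<le> length xs \<Longrightarrow> list_insert p x xs ! p = x"
  by (simp add: nth_list_insert)

lemma nth_list_remove:
  "p < length xs \<Longrightarrow> j < length xs - 1 \<Longrightarrow>
    list_remove p xs ! j = (if j < p then xs ! j else xs ! Suc j)"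
  by (auto simp: list_remove_def nth_append min_def)

lemma set_list_insert [simp]: "set (list_insert p x xs) = insert x (set xs)"
  by (metis list_insert_def append_take_drop_id insert_commute list.simps(15) set_append
      Un_insert_right)

lemma list_insert_list_remove: "p < length xs \<Longrightarrow> list_insert p (xs ! p) (list_remove p xs) = xs"
  by (simp add: list_insert_def list_remove_def id_take_nth_drop[symmetric] min_def)

lemma list_remove_list_insert: "p \<le> length xs \<Longrightarrow> list_remove p (list_insert p x xs) = xs"
  by (simp add: list_insert_def list_remove_def min_def)

lemma sum_list_list_insert: "sum_list (list_insert p x xs) = x + (sum_list xs :: 'a::comm_monoid_add)"
  by (metis list_insert_def append_take_drop_id sum_list_append sum_list.Cons add.left_commute)

lemma prod_lessThan_Suc_remove:
  fixes f :: "nat \<Rightarrow> 'a::comm_monoid_mult"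
  assumes "p \<le> k"
  shows "(\<Prod>j<Suc k. f j) = f p * (\<Prod>j<k. f (if j < p then j else Suc j))"
proof -
  have "(\<Prod>j<Suc k. f j) = f p * (\<Prod>j\<in>{..<Suc k} - {p}. f j)"
    using assms by (subst prod.remove[of _ p]) auto
  also have "(\<Prod>j\<in>{..<Suc k} - {p}. f j) = (\<Prod>j<k. f (if j < p then j else Suc j))"
    by (rule prod.reindex_bij_witness[where i = "\<lambda>j. if j < p then j else Suc j"
          and j = "\<lambda>j. if j < p then j else j - 1"]) (use assms in auto)
  finally show ?thesis .
qed

subsection \<open>Ordered partitions of a set\<close>

definition ordered_partitions :: "'a set \<Rightarrow> nat \<Rightarrow> 'a set list set" where
  "ordered_partitions S k = {Is. length Is = k \<and> (\<forall>j<k. Is ! j \<noteq> {})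
        \<and> (\<forall>i<k. \<forall>j<k. i \<noteq> j \<longrightarrow> Is ! i \<inter> Is ! j = {})
        \<and> \<Union>(set Is) = S}"

lemma ordered_set_partitions_eq: "ordered_set_partitions n k = ordered_partitions {1..n} k"
  by (simp add: ordered_set_partitions_def ordered_partitions_def)

lemma ordered_partitionsI:
  assumes "length Is = k"
    and "\<And>j. j < k \<Longrightarrow> Is ! j \<noteq> {}"
    and "\<And>i j. i < k \<Longrightarrow> j < k \<Longrightarrow> i \<noteq> j \<Longrightarrow> Is ! i \<inter> Is ! j = {}"
    and "\<And>j. j < k \<Longrightarrow> Is ! j \<subseteq> S"
    and "\<And>x. x \<in> S \<Longrightarrow> \<exists>j<k. x \<in> Is ! j"
  shows "Is \<in> ordered_partitions S k"
  unfolding ordered_partitions_def using assms by (fastforce simp: in_set_conv_nth)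

context
  fixes Is :: "'a set list" and S :: "'a set" and k :: nat
  assumes partition: "Is \<in> ordered_partitions S k"
begin

lemma ordered_partitions_length: "length Is = k"
  using partition by (simp add: ordered_partitions_def)

lemma ordered_partitions_nonempty: "j < k \<Longrightarrow> Is ! j \<noteq> {}"
  using partition by (simp add: ordered_partitions_def)

lemma ordered_partitions_disjoint: "i < k \<Longrightarrow> j < k \<Longrightarrow> i \<noteq> j \<Longrightarrow> Is ! i \<inter> Is ! j = {}"
  using partition by (simp add: ordered_partitions_def)

lemma ordered_partitions_subset: "j < k \<Longrightarrow> Is ! j \<subseteq> S"
  using partition by (auto simp: ordered_partitions_def)

lemma ordered_partitions_cover: "x \<in> S \<Longrightarrow> \<exists>j<k. x \<in> Is ! j"
  using partition by (auto simp: ordered_partitions_def in_set_conv_nth)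

lemma sum_card_ordered_partitions:
  assumes "finite S"
  shows "(\<Sum>j<k. card (Is ! j)) = card S"
proof -
  have "S = (\<Union>j<k. Is ! j)"
    using ordered_partitions_subset ordered_partitions_cover by blast
  then show ?thesis
    using assms ordered_partitions_subset ordered_partitions_disjoint
    by (simp add: card_UN_disjoint finite_subset)
qed

end

lemma finite_ordered_partitions:
  assumes "finite S"
  shows "finite (ordered_partitions S k)"
proof (rule finite_subset)
  show "ordered_partitions S k \<subseteq> {xs. set xs \<subseteq> Pow S \<and> length xs = k}"
    unfolding ordered_partitions_def by auto
  show "finite {xs. set xs \<subseteq> Pow S \<and> length xs = k}"
    using assms by (intro finite_lists_length_eq) auto
qed

lemma ordered_partitions_zero: "S \<noteq> {} \<Longrightarrow> ordered_partitions S 0 = {}"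
  by (auto simp: ordered_partitions_def)

lemma ordered_partitions_card_less:
  assumes "finite S" "card S < k"
  shows "ordered_partitions S k = {}"
proof (rule ccontr)
  assume "ordered_partitions S k \<noteq> {}"
  then obtain Is where Is: "Is \<in> ordered_partitions S k" by auto
  have "(\<Sum>j<k. 1) \<le> (\<Sum>j<k. card (Is ! j))"
  proof (rule sum_mono)
    fix j assume "j \<in> {..<k}"
    then have "Is ! j \<noteq> {}" "finite (Is ! j)"
      using ordered_partitions_nonempty[OF Is] ordered_partitions_subset[OF Is] assms(1)
      by (auto intro: finite_subset)
    then show "1 \<le> card (Is ! j)" by (simp add: Suc_le_eq card_gt_0_iff)
  qed
  then show False using sum_card_ordered_partitions[OF Is assms(1)] assms(2) by simp
qed

definition block_index :: "'a \<Rightarrow> 'a set list \<Rightarrow> nat" where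
  "block_index x Is = (THE j. j < length Is \<and> x \<in> Is ! j)"

lemma block_index_eq:
  "Is \<in> ordered_partitions S k \<Longrightarrow> p < k \<Longrightarrow> x \<in> Is ! p \<Longrightarrow> block_index x Is = p"
  unfolding block_index_def ordered_partitions_def by (rule the_equality) auto

lemma ordered_partitions_insert_singleton:
  assumes Js: "Js \<in> ordered_partitions R k" and "p \<le> k" "x \<notin> R"
  shows "list_insert p {x} Js \<in> ordered_partitions (insert x R) (Suc k)"
proof -
  note L = ordered_partitions_length[OF Js]
  define old where "old j = (if j < p then j else j - 1)" for j
  have nth: "list_insert p {x} Js ! j = (if j = p then {x} else Js ! old j)" if "j < Suc k" for j
    using that L assms(2) by (simp add: nth_list_insert old_def)
  have old: "old j < k" if "j < Suc k" "j \<noteq> p" for j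
    using that assms(2) by (auto simp: old_def)
  have old_inj: "old i \<noteq> old j" if "i \<noteq> p" "j \<noteq> p" "i \<noteq> j" for i j
    using that by (auto simp: old_def)
  have fresh: "x \<notin> Js ! j" if "j < k" for j
    using ordered_partitions_subset[OF Js that] assms(3) by blast
  show ?thesis
  proof (rule ordered_partitionsI)
    show "length (list_insert p {x} Js) = Suc k" using L assms(2) by simp
  next
    fix j assume "j < Suc k"
    then show "list_insert p {x} Js ! j \<noteq> {}"
      and "list_insert p {x} Js ! j \<subseteq> insert x R"
      using nth old ordered_partitions_nonempty[OF Js] ordered_partitions_subset[OF Js]
      by (cases "j = p"; fastforce)+
  next
    fix i j assume "i < Suc k" "j < Suc k" "i \<noteq> j"
    then show "list_insert p {x} Js ! i \<inter> list_insert p {x} Js ! j = {}"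
      using nth old old_inj fresh ordered_partitions_disjoint[OF Js] by (cases "i = p"; cases "j = p") auto
  next
    fix y assume "y \<in> insert x R"
    then show "\<exists>j<Suc k. y \<in> list_insert p {x} Js ! j"
    proof
      assume "y = x"
      then show ?thesis using assms(2) nth[of p] by (intro exI[of _ p]) auto
    next
      assume "y \<in> R"
      then obtain m where m: "m < k" "y \<in> Js ! m" using ordered_partitions_cover[OF Js] by blast
      define j where "j = (if m < p then m else Suc m)"
      have "j < Suc k" "j \<noteq> p" "old j = m" using m(1) by (auto simp: j_def old_def)
      then show ?thesis using nth m(2) by auto
    qed
  qed
qed

lemma ordered_partitions_remove_singleton:
  assumes Is: "Is \<in> ordered_partitions (insert x R) (Suc k)"
    and "p < Suc k" "Is ! p = {x}" "x \<notin> R"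
  shows "list_remove p Is \<in> ordered_partitions R k"
proof -
  note L = ordered_partitions_length[OF Is]
  define old where "old j = (if j < p then j else Suc j)" for j
  have nth: "list_remove p Is ! j = Is ! old j" if "j < k" for j
    using that L assms(2) by (simp add: nth_list_remove old_def)
  have old: "old j < Suc k" "old j \<noteq> p" if "j < k" for j
    using that by (auto simp: old_def)
  have other: "Is ! j \<subseteq> R" if "j < Suc k" "j \<noteq> p" for j
    using that ordered_partitions_subset[OF Is] ordered_partitions_disjoint[OF Is] assms(2,3)
    by blast
  show ?thesis
  proof (rule ordered_partitionsI)
    show "length (list_remove p Is) = k" using L assms(2) by simp
  next
    fix j assume "j < k"
    then show "list_remove p Is ! j \<noteq> {}" and "list_remove p Is ! j \<subseteq> R"
      using nth old other ordered_partitions_nonempty[OF Is] by auto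
  next
    fix i j assume "i < k" "j < k" "i \<noteq> j"
    moreover have "old i \<noteq> old j" using \<open>i \<noteq> j\<close> by (auto simp: old_def)
    ultimately show "list_remove p Is ! i \<inter> list_remove p Is ! j = {}"
      using nth old ordered_partitions_disjoint[OF Is] by auto
  next
    fix y assume y: "y \<in> R"
    then obtain j where j: "j < Suc k" "y \<in> Is ! j" using ordered_partitions_cover[OF Is] by blast
    with y assms(3,4) have "j \<noteq> p" by auto
    define m where "m = (if j < p then j else j - 1)"
    have "m < k" "old m = j"
      using j(1) \<open>j \<noteq> p\<close> assms(2) by (auto simp: m_def old_def)
    with j(2) nth show "\<exists>j<k. y \<in> list_remove p Is ! j" by auto
  qed
qed

lemma ordered_partitions_extend_block:
  assumes Js: "Js \<in> ordered_partitions R k" and "p < k" "x \<notin> R"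
  shows "Js[p := insert x (Js ! p)] \<in> ordered_partitions (insert x R) k"
proof -
  note L = ordered_partitions_length[OF Js]
  have fresh: "x \<notin> Js ! j" if "j < k" for j
    using ordered_partitions_subset[OF Js that] assms(3) by blast
  show ?thesis
  proof (rule ordered_partitionsI)
    fix j assume "j < k"
    then show "Js[p := insert x (Js ! p)] ! j \<noteq> {}"
      and "Js[p := insert x (Js ! p)] ! j \<subseteq> insert x R"
      using L ordered_partitions_nonempty[OF Js] ordered_partitions_subset[OF Js]
      by (cases "j = p"; fastforce)+
  next
    fix i j assume "i < k" "j < k" "i \<noteq> j"
    then show "Js[p := insert x (Js ! p)] ! i \<inter> Js[p := insert x (Js ! p)] ! j = {}"
      using L fresh ordered_partitions_disjoint[OF Js] by (cases "i = p"; cases "j = p") auto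
  next
    fix y assume "y \<in> insert x R"
    then show "\<exists>j<k. y \<in> Js[p := insert x (Js ! p)] ! j"
    proof
      assume "y = x"
      then show ?thesis using assms(2) L by auto
    next
      assume "y \<in> R"
      then obtain j where "j < k" "y \<in> Js ! j" using ordered_partitions_cover[OF Js] by blast
      then show ?thesis using L by (cases "j = p") auto
    qed
  qed (use L in simp)
qed

lemma ordered_partitions_shrink_block:
  assumes Is: "Is \<in> ordered_partitions (insert x R) k"
    and "p < k" "x \<in> Is ! p" "Is ! p \<noteq> {x}" "x \<notin> R"
  shows "Is[p := Is ! p - {x}] \<in> ordered_partitions R k"
proof -
  note L = ordered_partitions_length[OF Is]
  have other: "x \<notin> Is ! j" if "j < k" "j \<noteq> p" for j
    using that ordered_partitions_disjoint[OF Is] assms(2,3) by blast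
  show ?thesis
  proof (rule ordered_partitionsI)
    fix j assume "j < k"
    then show "Is[p := Is ! p - {x}] ! j \<noteq> {}"
      and "Is[p := Is ! p - {x}] ! j \<subseteq> R"
      using L assms(3,4) other ordered_partitions_nonempty[OF Is] ordered_partitions_subset[OF Is]
      by (cases "j = p"; fastforce)+
  next
    fix i j assume "i < k" "j < k" "i \<noteq> j"
    then show "Is[p := Is ! p - {x}] ! i \<inter> Is[p := Is ! p - {x}] ! j = {}"
      using L ordered_partitions_disjoint[OF Is] by (cases "i = p"; cases "j = p") auto
  next
    fix y assume y: "y \<in> R"
    then obtain j where j: "j < k" "y \<in> Is ! j" using ordered_partitions_cover[OF Is] by blast
    then have "y \<in> Is[p := Is ! p - {x}] ! j" using y assms(5) L by (cases "j = p") auto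
    with j show "\<exists>j<k. y \<in> Is[p := Is ! p - {x}] ! j" by blast
  qed (use L in simp)
qed

lemma singleton_notin_extend_block:
  assumes Js: "Js \<in> ordered_partitions R k" and "p < k" "x \<notin> R"
  shows "{x} \<notin> set (Js[p := insert x (Js ! p)])"
proof
  note L = ordered_partitions_length[OF Js]
  assume "{x} \<in> set (Js[p := insert x (Js ! p)])"
  then obtain j where j: "j < k" "Js[p := insert x (Js ! p)] ! j = {x}"
    using L by (auto simp: in_set_conv_nth)
  have "x \<notin> Js ! j" "Js ! p \<noteq> {}" "x \<notin> Js ! p"
    using ordered_partitions_subset[OF Js] ordered_partitions_nonempty[OF Js] assms(2,3) j(1)
    by blast+
  then show False using j L by (cases "j = p") auto
qed

text \<open>
  Deleting \<open>x\<close> sets up two bijections: ordered partitions of \<open>insert x R\<close> in which \<open>{x}\<close> is a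
  block correspond to an ordered partition of \<open>R\<close> together with the position of \<open>{x}\<close>, the
  others to an ordered partition of \<open>R\<close> together with the block that receives \<open>x\<close>.
\<close>

lemma sum_ordered_partitions_with_singleton:
  assumes "x \<notin> R"
  shows "(\<Sum>Is\<in>ordered_partitions (insert x R) (Suc k) \<inter> {Is. {x} \<in> set Is}. f Is)
       = (\<Sum>p<Suc k. \<Sum>Js\<in>ordered_partitions R k. f (list_insert p {x} Js))"
proof -
  have "(\<Sum>Is\<in>ordered_partitions (insert x R) (Suc k) \<inter> {Is. {x} \<in> set Is}. f Is)
      = (\<Sum>(p, Js)\<in>{..<Suc k} \<times> ordered_partitions R k. f (list_insert p {x} Js))"
  proof (rule sum.reindex_bij_witness[where i = "\<lambda>(p, Js). list_insert p {x} Js"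
        and j = "\<lambda>Is. (block_index x Is, list_remove (block_index x Is) Is)"])
    fix Is assume "Is \<in> ordered_partitions (insert x R) (Suc k) \<inter> {Is. {x} \<in> set Is}"
    then have Is: "Is \<in> ordered_partitions (insert x R) (Suc k)" "{x} \<in> set Is" by auto
    note L = ordered_partitions_length[OF Is(1)]
    from Is(2) L obtain q where q: "q < Suc k" "Is ! q = {x}" by (auto simp: in_set_conv_nth)
    have "block_index x Is = q" using block_index_eq[OF Is(1) q(1)] q(2) by simp
    then show "(block_index x Is, list_remove (block_index x Is) Is) \<in> {..<Suc k} \<times> ordered_partitions R k"
      and "(case (block_index x Is, list_remove (block_index x Is) Is) of (p, Js) \<Rightarrow> list_insert p {x} Js) = Is"
      and "(case (block_index x Is, list_remove (block_index x Is) Is) of (p, Js) \<Rightarrow> f (list_insert p {x} Js)) = f Is"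
      using ordered_partitions_remove_singleton[OF Is(1) q assms] list_insert_list_remove[of q Is] q L
      by auto
  next
    fix b assume "b \<in> {..<Suc k} \<times> ordered_partitions R k"
    then obtain p Js where b: "b = (p, Js)" "p < Suc k" "Js \<in> ordered_partitions R k" by auto
    note L = ordered_partitions_length[OF b(3)]
    have Is: "list_insert p {x} Js \<in> ordered_partitions (insert x R) (Suc k)"
      using ordered_partitions_insert_singleton[OF b(3) _ assms] b(2) by simp
    have "block_index x (list_insert p {x} Js) = p"
      using block_index_eq[OF Is b(2)] b(2) L by simp
    then show "(\<lambda>Is. (block_index x Is, list_remove (block_index x Is) Is)) (case b of (p, Js) \<Rightarrow> list_insert p {x} Js) = b"
      using list_remove_list_insert[of p Js "{x}"] b L by simp
    show "(case b of (p, Js) \<Rightarrow> list_insert p {x} Js) \<in> ordered_partitions (insert x R) (Suc k) \<inter> {Is. {x} \<in> set Is}"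
      using Is b by simp
  qed
  then show ?thesis by (simp add: sum.cartesian_product)
qed

lemma sum_ordered_partitions_without_singleton:
  assumes "x \<notin> R"
  shows "(\<Sum>Is\<in>ordered_partitions (insert x R) k - {Is. {x} \<in> set Is}. f Is)
       = (\<Sum>Js\<in>ordered_partitions R k. \<Sum>p<k. f (Js[p := insert x (Js ! p)]))"
proof -
  have "(\<Sum>Is\<in>ordered_partitions (insert x R) k - {Is. {x} \<in> set Is}. f Is)
      = (\<Sum>(p, Js)\<in>{..<k} \<times> ordered_partitions R k. f (Js[p := insert x (Js ! p)]))"
  proof (rule sum.reindex_bij_witness[where i = "\<lambda>(p, Js). Js[p := insert x (Js ! p)]"
        and j = "\<lambda>Is. (block_index x Is, Is[block_index x Is := Is ! block_index x Is - {x}])"])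
    fix Is assume "Is \<in> ordered_partitions (insert x R) k - {Is. {x} \<in> set Is}"
    then have Is: "Is \<in> ordered_partitions (insert x R) k" "{x} \<notin> set Is" by auto
    note L = ordered_partitions_length[OF Is(1)]
    obtain q where q: "q < k" "x \<in> Is ! q" using ordered_partitions_cover[OF Is(1)] by blast
    have ne: "Is ! q \<noteq> {x}" using Is(2) q L by (metis nth_mem)
    have "block_index x Is = q" using block_index_eq[OF Is(1) q] .
    then show "(block_index x Is, Is[block_index x Is := Is ! block_index x Is - {x}]) \<in> {..<k} \<times> ordered_partitions R k"
      and "(case (block_index x Is, Is[block_index x Is := Is ! block_index x Is - {x}]) of
             (p, Js) \<Rightarrow> Js[p := insert x (Js ! p)]) = Is"
      and "(case (block_index x Is, Is[block_index x Is := Is ! block_index x Is - {x}]) of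
             (p, Js) \<Rightarrow> f (Js[p := insert x (Js ! p)])) = f Is"
      using ordered_partitions_shrink_block[OF Is(1) q ne assms] q L by (auto simp: insert_absorb)
  next
    fix b assume "b \<in> {..<k} \<times> ordered_partitions R k"
    then obtain p Js where b: "b = (p, Js)" "p < k" "Js \<in> ordered_partitions R k" by auto
    note L = ordered_partitions_length[OF b(3)]
    have Is: "Js[p := insert x (Js ! p)] \<in> ordered_partitions (insert x R) k"
      using ordered_partitions_extend_block[OF b(3) b(2) assms] .
    have "x \<notin> Js ! p" using ordered_partitions_subset[OF b(3) b(2)] assms by blast
    moreover have "block_index x (Js[p := insert x (Js ! p)]) = p"
      using block_index_eq[OF Is b(2)] b(2) L by simp
    ultimately show "(\<lambda>Is. (block_index x Is, Is[block_index x Is := Is ! block_index x Is - {x}]))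
        (case b of (p, Js) \<Rightarrow> Js[p := insert x (Js ! p)]) = b"
      using b L by simp
    show "(case b of (p, Js) \<Rightarrow> Js[p := insert x (Js ! p)]) \<in> ordered_partitions (insert x R) k - {Is. {x} \<in> set Is}"
      using Is b singleton_notin_extend_block[OF b(3) b(2) assms] by simp
  qed
  then show ?thesis by (simp add: sum.cartesian_product[symmetric] sum.swap[of _ "{..<k}"])
qed

subsection \<open>Weights of blocks and partitions\<close>

definition block_weight :: "('a \<Rightarrow> real) \<Rightarrow> 'a set \<Rightarrow> nat \<Rightarrow> real" where
  "block_weight a I d = ((2 * (\<Sum>l\<in>I. a l) + 1) gchoose (2 * d))
                   * (\<Prod>i=1..card I - 1. (of_nat (2 * d + 1) - 2 * of_nat i))"

definition partition_weight :: "('a \<Rightarrow> real) \<Rightarrow> nat \<Rightarrow> 'a set list \<Rightarrow> nat list \<Rightarrow> real" where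
  "partition_weight a k Is ds = (\<Prod>j<k. block_weight a (Is ! j) (ds ! j))"

definition weighted_partition_sum :: "('a \<Rightarrow> real) \<Rightarrow> 'a set \<Rightarrow> nat \<Rightarrow> nat \<Rightarrow> real" where
  "weighted_partition_sum a S N k =
     (\<Sum>Is\<in>ordered_partitions S k. \<Sum>ds\<in>weak_compositions k N. partition_weight a k Is ds)"

lemma P_eq_weighted_partition_sum:
  "P g n a = (\<Sum>k=1..n. (-1)^k * fact (2*g - 3 + k) / fact k * weighted_partition_sum a {1..n} (g - 2 + n) k)"
  unfolding P_def weighted_partition_sum_def partition_weight_def block_weight_def
    ordered_set_partitions_eq by simp

lemma block_weight_singleton:
  assumes "a x = 0"
  shows "block_weight a {x} d = (if d = 0 then 1 else 0)"
proof -
  have "(1::real) gchoose (2 * d) = of_nat (1 choose (2 * d))"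
    by (simp add: binomial_gbinomial)
  then show ?thesis using assms by (auto simp: block_weight_def)
qed

lemma block_weight_insert:
  assumes "a x = 0" "x \<notin> I" "finite I" "I \<noteq> {}"
  shows "block_weight a (insert x I) d = block_weight a I d * (of_nat (2 * d + 1) - 2 * of_nat (card I))"
proof -
  obtain m where m: "card I = Suc m" using assms(3,4) by (cases "card I") auto
  have "(\<Sum>l\<in>insert x I. a l) = (\<Sum>l\<in>I. a l)" "card (insert x I) = Suc (Suc m)"
    using assms m by simp_all
  then show ?thesis unfolding block_weight_def m
    by (simp add: prod.nat_ivl_Suc' mult_ac)
qed

lemma partition_weight_list_insert:
  assumes "length Js = k" "length es = k" "p \<le> k"
  shows "partition_weight a (Suc k) (list_insert p X Js) (list_insert p d es)
       = block_weight a X d * partition_weight a k Js es"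
  unfolding partition_weight_def using assms
  by (subst prod_lessThan_Suc_remove[OF assms(3)]) (auto simp: nth_list_insert intro!: prod.cong)

lemma partition_weight_update:
  assumes "p < k" "length Js = k"
  shows "partition_weight a k (Js[p := Y]) ds
       = block_weight a Y (ds ! p) * (\<Prod>j\<in>{..<k} - {p}. block_weight a (Js ! j) (ds ! j))"
  unfolding partition_weight_def using assms by (subst prod.remove[of _ p]) (auto intro!: prod.cong)

lemma finite_weak_compositions: "finite (weak_compositions k m)"
proof (rule finite_subset)
  show "weak_compositions k m \<subseteq> {xs. set xs \<subseteq> {0..m} \<and> length xs = k}"
    unfolding weak_compositions_def using member_le_sum_list by fastforce
  show "finite {xs. set xs \<subseteq> {0..m} \<and> length xs = k}"
    by (intro finite_lists_length_eq) auto
qed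

text \<open>A singleton block \<open>{x}\<close> with \<open>a x = 0\<close> forces its part to be \<open>0\<close>, so it can be deleted.\<close>

lemma sum_partition_weight_insert_singleton:
  assumes "a x = 0" "length Js = k" "p \<le> k"
  shows "(\<Sum>ds\<in>weak_compositions (Suc k) N. partition_weight a (Suc k) (list_insert p {x} Js) ds)
       = (\<Sum>es\<in>weak_compositions k N. partition_weight a k Js es)"
proof -
  have "(\<Sum>ds\<in>weak_compositions (Suc k) N. partition_weight a (Suc k) (list_insert p {x} Js) ds)
      = (\<Sum>ds\<in>{ds \<in> weak_compositions (Suc k) N. ds ! p = 0}. partition_weight a k Js (list_remove p ds))"
  proof (subst sum.inter_filter[OF finite_weak_compositions], rule sum.cong[OF refl])
    fix ds assume "ds \<in> weak_compositions (Suc k) N"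
    then have "length ds = Suc k" by (simp add: weak_compositions_def)
    then have "partition_weight a (Suc k) (list_insert p {x} Js) ds
        = partition_weight a (Suc k) (list_insert p {x} Js) (list_insert p (ds ! p) (list_remove p ds))"
      using assms(3) by (simp add: list_insert_list_remove)
    also have "\<dots> = block_weight a {x} (ds ! p) * partition_weight a k Js (list_remove p ds)"
      using \<open>length ds = Suc k\<close> assms by (intro partition_weight_list_insert) auto
    finally show "partition_weight a (Suc k) (list_insert p {x} Js) ds
        = (if ds ! p = 0 then partition_weight a k Js (list_remove p ds) else 0)"
      using block_weight_singleton[of a x, OF assms(1)] by simp
  qed
  also have "\<dots> = (\<Sum>es\<in>weak_compositions k N. partition_weight a k Js es)"
  proof (rule sum.reindex_bij_witness[where i = "list_insert p 0" and j = "list_remove p"])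
    fix ds assume "ds \<in> {ds \<in> weak_compositions (Suc k) N. ds ! p = 0}"
    then have ds: "length ds = Suc k" "ds ! p = 0" "sum_list ds = N"
      by (auto simp: weak_compositions_def)
    then show "list_insert p 0 (list_remove p ds) = ds"
      using list_insert_list_remove[of p ds] assms(3) by simp
    show "list_remove p ds \<in> weak_compositions k N"
      using ds assms(3) list_insert_list_remove[of p ds] sum_list_list_insert[of p 0 "list_remove p ds"]
      by (simp add: weak_compositions_def)
  next
    fix es assume "es \<in> weak_compositions k N"
    then have es: "length es = k" "sum_list es = N" by (auto simp: weak_compositions_def)
    then show "list_remove p (list_insert p 0 es) = es"
      using list_remove_list_insert[of p es 0] assms(3) by simp
    show "list_insert p 0 es \<in> {ds \<in> weak_compositions (Suc k) N. ds ! p = 0}"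
      using es assms(3) by (simp add: weak_compositions_def sum_list_list_insert)
  qed simp
  finally show ?thesis .
qed

text \<open>
  Adding \<open>x\<close> with \<open>a x = 0\<close> to the block \<open>J\<close> multiplies its weight by \<open>2d + 1 - 2|J|\<close>;
  summed over all blocks these factors add up to a constant, since the parts sum to \<open>N\<close>
  and the block sizes to \<open>|R|\<close>.
\<close>

lemma sum_partition_weight_extend_blocks:
  assumes "a x = 0" "x \<notin> R" "finite R" and Js: "Js \<in> ordered_partitions R k"
  shows "(\<Sum>p<k. \<Sum>ds\<in>weak_compositions k N. partition_weight a k (Js[p := insert x (Js ! p)]) ds)
       = (2 * of_nat N + of_nat k - 2 * of_nat (card R)) * (\<Sum>ds\<in>weak_compositions k N. partition_weight a k Js ds)"
proof -
  note L = ordered_partitions_length[OF Js]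
  have extend: "partition_weight a k (Js[p := insert x (Js ! p)]) ds
      = partition_weight a k Js ds * (of_nat (2 * (ds ! p) + 1) - 2 * of_nat (card (Js ! p)))"
    if "p < k" for p ds
  proof -
    have "x \<notin> Js ! p" "finite (Js ! p)" "Js ! p \<noteq> {}"
      using ordered_partitions_subset[OF Js that] ordered_partitions_nonempty[OF Js that] assms(2,3)
      by (auto intro: finite_subset)
    then show ?thesis
      using partition_weight_update[OF that L, of a "insert x (Js ! p)" ds]
        partition_weight_update[OF that L, of a "Js ! p" ds] block_weight_insert[of a x, OF assms(1)] L
      by (simp add: mult_ac)
  qed
  have factor_sum: "(\<Sum>p<k. (of_nat (2 * (ds ! p) + 1) - 2 * of_nat (card (Js ! p)) :: real))
      = 2 * of_nat N + of_nat k - 2 * of_nat (card R)" if "ds \<in> weak_compositions k N" for ds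
  proof -
    have "length ds = k" "sum_list ds = N" using that by (auto simp: weak_compositions_def)
    then have "(\<Sum>p<k. ds ! p) = N" by (simp add: sum_list_sum_nth atLeast0LessThan)
    then have "(\<Sum>p<k. (of_nat (ds ! p) :: real)) = of_nat N" by (metis of_nat_sum)
    moreover have "(\<Sum>p<k. (of_nat (card (Js ! p)) :: real)) = of_nat (card R)"
      using sum_card_ordered_partitions[OF Js assms(3)] by (metis of_nat_sum)
    ultimately show ?thesis by (simp add: sum_subtractf sum.distrib sum_distrib_left[symmetric])
  qed
  have "(\<Sum>p<k. \<Sum>ds\<in>weak_compositions k N. partition_weight a k (Js[p := insert x (Js ! p)]) ds)
      = (\<Sum>ds\<in>weak_compositions k N. partition_weight a k Js ds
           * (\<Sum>p<k. (of_nat (2 * (ds ! p) + 1) - 2 * of_nat (card (Js ! p)))))"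
    by (subst sum.swap) (simp add: extend sum_distrib_left)
  also have "\<dots> = (\<Sum>ds\<in>weak_compositions k N. partition_weight a k Js ds
           * (2 * of_nat N + of_nat k - 2 * of_nat (card R)))"
    by (rule sum.cong[OF refl]) (simp only: factor_sum)
  finally show ?thesis by (simp add: sum_distrib_right mult.commute)
qed

lemma weighted_partition_sum_insert:
  assumes "a x = 0" "x \<notin> R" "finite R"
  shows "weighted_partition_sum a (insert x R) N (Suc k)
       = of_nat (Suc k) * weighted_partition_sum a R N k
         + (2 * of_nat N + of_nat (Suc k) - 2 * of_nat (card R)) * weighted_partition_sum a R N (Suc k)"
proof -
  define G where "G Is = (\<Sum>ds\<in>weak_compositions (Suc k) N. partition_weight a (Suc k) Is ds)" for Is
  have "weighted_partition_sum a (insert x R) N (Suc k)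
      = sum G (ordered_partitions (insert x R) (Suc k) \<inter> {Is. {x} \<in> set Is})
        + sum G (ordered_partitions (insert x R) (Suc k) - {Is. {x} \<in> set Is})"
    unfolding weighted_partition_sum_def G_def
    by (rule sum.Int_Diff) (simp add: finite_ordered_partitions assms(3))
  also have "sum G (ordered_partitions (insert x R) (Suc k) \<inter> {Is. {x} \<in> set Is})
      = of_nat (Suc k) * weighted_partition_sum a R N k"
    unfolding sum_ordered_partitions_with_singleton[OF assms(2)] G_def weighted_partition_sum_def
    by (simp add: sum_partition_weight_insert_singleton[of a x, OF assms(1)] ordered_partitions_length)
  also have "sum G (ordered_partitions (insert x R) (Suc k) - {Is. {x} \<in> set Is})
      = (2 * of_nat N + of_nat (Suc k) - 2 * of_nat (card R)) * weighted_partition_sum a R N (Suc k)"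
    unfolding sum_ordered_partitions_without_singleton[OF assms(2)] G_def weighted_partition_sum_def
    by (simp only: sum_partition_weight_extend_blocks[of a x, OF assms] sum_distrib_left cong: sum.cong)
  finally show ?thesis .
qed

subsection \<open>Telescoping\<close>

lemma alternating_sum_telescopes:
  fixes T X :: "nat \<Rightarrow> real"
  assumes step: "\<And>k. T (Suc k) = of_nat (Suc k) * X k + of_nat (c + Suc k) * X (Suc k)"
    and "X 0 = 0" "X n = 0"
  shows "(\<Sum>k=1..n. (-1)^k * fact (c + k - 1) / fact k * T k) = 0"
proof -
  define u where "u k = (-1)^k * fact (c + k) / fact k * X k" for k
  have "(-1)^Suc k * fact (c + Suc k - 1) / fact (Suc k) * T (Suc k) = u (Suc k) - u k" for k
  proof -
    have "fact (c + Suc k) = of_nat (c + Suc k) * (fact (c + k) :: real)"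
      by (simp del: of_nat_Suc)
    then show ?thesis unfolding step u_def by (simp add: field_simps del: of_nat_Suc)
  qed
  then have "(\<Sum>k=1..n. (-1)^k * fact (c + k - 1) / fact k * T k) = (\<Sum>k<n. u (Suc k) - u k)"
    by (simp add: sum.atLeast1_atMost_eq)
  also have "\<dots> = u n - u 0" by (rule sum_lessThan_telescope)
  finally show ?thesis using assms(2,3) by (simp add: u_def)
qed

theorem proposition5p3:
  fixes g n i :: nat and a :: "nat \<Rightarrow> real"
  assumes "g \<ge> 2" and "n \<ge> 2" and "i \<in> {1..n}" and "a i = 0"
  shows "P g n a = 0"
proof -
  define R where "R = {1..n} - {i}"
  have R: "{1..n} = insert i R" "i \<notin> R" "finite R" "card R = n - 1"
    using assms(3) unfolding R_def by auto
  have "P g n a = (\<Sum>k=1..n. (-1)^k * fact (2*g - 2 + k - 1) / fact k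
                     * weighted_partition_sum a (insert i R) (g - 2 + n) k)"
    unfolding P_eq_weighted_partition_sum R(1) using assms(1)
    by (intro sum.cong) (auto simp: numeral_eq_Suc)
  also have "\<dots> = 0"
  proof (rule alternating_sum_telescopes)
    show "weighted_partition_sum a (insert i R) (g - 2 + n) (Suc k)
        = of_nat (Suc k) * weighted_partition_sum a R (g - 2 + n) k
          + of_nat (2 * g - 2 + Suc k) * weighted_partition_sum a R (g - 2 + n) (Suc k)" for k
      using weighted_partition_sum_insert[of a i, OF assms(4) R(2,3)] R(4) assms(1,2)
      by (simp add: of_nat_diff)
    have "R \<noteq> {}" using R(4) assms(2) by auto
    then show "weighted_partition_sum a R (g - 2 + n) 0 = 0"
      by (simp add: weighted_partition_sum_def ordered_partitions_zero)
    show "weighted_partition_sum a R (g - 2 + n) n = 0"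
      using R(3,4) assms(2) by (simp add: weighted_partition_sum_def ordered_partitions_card_less)
  qed
  finally show ?thesis .
qed

end
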